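(* Let $n\ge1$, $q$ a prime power, and $\mathcal{F}$ a covering of $[n]$ with no redundant basic set and with exactly two connected components. Then the $\mathcal{F}$-combinatorial metric satisfies the MacWilliams Extension Property if and only if $\mathcal{F}$ is a $k$-partition of $[n]$ for some $k$.
   Context: For a covering $\mathcal{F}$ of $[n]$ (subsets called basic sets, union $[n]$) and $x\in\mathbb{F}_q^n$, $\mathrm{wt}_{\mathcal{F}}(x)=\min\{|\mathcal{A}|:\mathcal{A}\subset\mathcal{F},\ \mathrm{supp}(x)\subset\bigcup_{A\in\mathcal{A}}A\}$ with $\mathrm{supp}(x)=\{i:x_i\ne0\}$, and $d_{\mathcal{F}}(x,y)=\mathrm{wt}_{\mathcal{F}}(x-y)$. A basic set is redundant if properly contained in another. $\mathcal{F}$ is a $k$-partition if it is a partition of $[n]$ with all blocks of cardinality $k$. A subfamily $\mathcal{S}\subset\mathcal{F}$ is connected if it cannot be written as $\mathcal{A}\cup\mathcal{B}$ with $\mathcal{A},\mathcal{B}$ nonempty and $A\cap B=\emptyset$ for all $A\in\mathcal{A},B\in\mathcal{B}$; connected components are maximal connected subfamilies. A local $\mathcal{F}$-equivalence between linear codes $\mathcal{C}_1,\mathcal{C}_2\subset\mathbb{F}_q^n$ is a linear map $t:\mathcal{C}_1\to\mathcal{C}_2$ preserving $\mathrm{wt}_{\mathcal{F}}$. The metric satisfies the MacWilliams Extension Property if for all linear codes $\mathcal{C}_1,\mathcal{C}_2$ every local $\mathcal{F}$-equivalence $t$ extends to a linear isometry $T$ of $(\mathbb{F}_q^n,d_{\mathcal{F}})$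 with $T|_{\mathcal{C}_1}=t$. *)

theory Defs
  imports Main "HOL-Library.Function_Algebras"
begin

text \<open>A vector of F_q^n is a function
  nat => 'f vanishing outside {1..n}; the finite field F_q is a type of class
  {finite, field} (every finite field has prime-power order and conversely).\<close>

definition vecs :: "nat \<Rightarrow> (nat \<Rightarrow> 'f::field) set" where
  "vecs n = {x. \<forall>i. i \<notin> {1..n} \<longrightarrow> x i = 0}"

definition supp :: "(nat \<Rightarrow> 'f::zero) \<Rightarrow> nat set" where
  "supp x = {i. x i \<noteq> 0}"

definition smult_vec :: "'f::field \<Rightarrow> (nat \<Rightarrow> 'f) \<Rightarrow> (nat \<Rightarrow> 'f)" where
  "smult_vec c x = (\<lambda>i. c * x i)"

definition is_covering :: "nat \<Rightarrow> nat set set \<Rightarrow> bool" where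
  "is_covering n F \<longleftrightarrow> (\<forall>A\<in>F. A \<subseteq> {1..n}) \<and> \<Union>F = {1..n}"

definition no_redundant :: "nat set set \<Rightarrow> bool" where
  "no_redundant F \<longleftrightarrow> \<not> (\<exists>A\<in>F. \<exists>B\<in>F. A \<subset> B)"

definition wtF :: "nat set set \<Rightarrow> (nat \<Rightarrow> 'f::zero) \<Rightarrow> nat" where
  "wtF F x = (LEAST k. \<exists>\<A>. \<A> \<subseteq> F \<and> finite \<A> \<and> card \<A> = k \<and> supp x \<subseteq> \<Union>\<A>)"

definition dF :: "nat set set \<Rightarrow> (nat \<Rightarrow> 'f::ab_group_add) \<Rightarrow> (nat \<Rightarrow> 'f) \<Rightarrow> nat" where
  "dF F x y = wtF F (x - y)"

definition linear_code :: "nat \<Rightarrow> (nat \<Rightarrow> 'f::field) set \<Rightarrow> bool" where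
  "linear_code n C \<longleftrightarrow> C \<subseteq> vecs n \<and> 0 \<in> C \<and>
     (\<forall>x\<in>C. \<forall>y\<in>C. x + y \<in> C) \<and> (\<forall>c. \<forall>x\<in>C. smult_vec c x \<in> C)"

definition linear_on :: "(nat \<Rightarrow> 'f::field) set \<Rightarrow> ((nat \<Rightarrow> 'f) \<Rightarrow> (nat \<Rightarrow> 'f)) \<Rightarrow> bool" where
  "linear_on C t \<longleftrightarrow> (\<forall>x\<in>C. \<forall>y\<in>C. t (x + y) = t x + t y) \<and>
     (\<forall>c. \<forall>x\<in>C. t (smult_vec c x) = smult_vec c (t x))"

definition local_equiv :: "nat set set \<Rightarrow> (nat \<Rightarrow> 'f::field) set \<Rightarrow> (nat \<Rightarrow> 'f) set
     \<Rightarrow> ((nat \<Rightarrow> 'f) \<Rightarrow> (nat \<Rightarrow> 'f)) \<Rightarrow> bool" where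
  "local_equiv F C1 C2 t \<longleftrightarrow> linear_on C1 t \<and> t ` C1 \<subseteq> C2 \<and> (\<forall>x\<in>C1. wtF F (t x) = wtF F x)"

definition linear_isometry :: "nat \<Rightarrow> nat set set \<Rightarrow> ((nat \<Rightarrow> 'f::field) \<Rightarrow> (nat \<Rightarrow> 'f)) \<Rightarrow> bool" where
  "linear_isometry n F T \<longleftrightarrow> linear_on (vecs n) T \<and> T ` vecs n \<subseteq> vecs n \<and>
     (\<forall>x\<in>vecs n. \<forall>y\<in>vecs n. dF F (T x) (T y) = dF F x y)"

definition MEP :: "'f::field itself \<Rightarrow> nat \<Rightarrow> nat set set \<Rightarrow> bool" where
  "MEP _ n F \<longleftrightarrow> (\<forall>(C1::(nat \<Rightarrow> 'f) set) C2 t. linear_code n C1 \<and> linear_code n C2 \<and>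
      local_equiv F C1 C2 t \<longrightarrow>
      (\<exists>T. linear_isometry n F T \<and> (\<forall>x\<in>C1. T x = t x)))"

definition connected_fam :: "nat set set \<Rightarrow> bool" where
  "connected_fam S \<longleftrightarrow> \<not> (\<exists>\<A> \<B>. \<A> \<noteq> {} \<and> \<B> \<noteq> {} \<and> S = \<A> \<union> \<B> \<and>
      (\<forall>A\<in>\<A>. \<forall>B\<in>\<B>. A \<inter> B = {}))"

definition components :: "nat set set \<Rightarrow> nat set set set" where
  "components F = {S. S \<subseteq> F \<and> connected_fam S \<and>
      (\<forall>S'. S \<subseteq> S' \<and> S' \<subseteq> F \<and> connected_fam S' \<longrightarrow> S' = S)}"

definition k_partition :: "nat \<Rightarrow> nat set set \<Rightarrow> nat \<Rightarrow> bool" where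
  "k_partition n F k \<longleftrightarrow> \<Union>F = {1..n} \<and> (\<forall>A\<in>F. A \<noteq> {} \<and> card A = k) \<and>
      (\<forall>A\<in>F. \<forall>B\<in>F. A \<noteq> B \<longrightarrow> A \<inter> B = {})"

end

theory Submission
  imports Defs "HOL-Library.FuncSet" "HOL.Vector_Spaces"
begin

text \<open>
  Necessity. The extension property lets one send any nonzero vector to any vector of the same
  weight by a linear isometry. If two blocks A, A' meet in a point i, pick j in a block of the other
  component; then the indicator vector of A \<union> A' and e_i + e_j both have weight 2. An isometry
  T sending the first to the second sends each of the three distinct vectors 1_A, 1_A', 1_(A - A')
  to e_i or e_j: each of them and its complement in 1_(A \<union> A') lie in a single block, so T maps
  them to a splitting of e_i + e_j into two vectors of weight at most one. This contradicts
  injectivity, so the blocks are disjoint and there are exactly two of them, A and B. If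
  |A| > |B|, an isometry sending e_i to e_j (i \<in> A, j \<in> B) maps the q^|A| vectors supported on
  A injectively into the q^|B| vectors supported on B, which is impossible.

  Sufficiency. For F = {A, B} with |A| = |B|, weight preservation forces a local equivalence t to
  send the codewords supported on A into one block A' and those supported on B into the other
  block B'. Then proj A' \<circ> t factors through proj A by an injective linear map, which extends to
  an injective linear map between the vectors on A and those on A', as these spaces have equal
  dimension. Doing the same for B and adding the two maps gives the required isometry.
\<close>

section \<open>Vectors, supports and the combinatorial weight\<close>

lemma smult_vec_apply [simp]: "smult_vec c x m = c * x m"
  by (simp add: smult_vec_def)

lemma smult_vec_zero_left [simp]: "smult_vec 0 x = (0 :: nat \<Rightarrow> 'f::field)"
  by (simp add: fun_eq_iff)

lemma smult_vec_one [simp]: "smult_vec 1 x = (x :: nat \<Rightarrow> 'f::field)"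
  by (simp add: fun_eq_iff)

lemma smult_vec_minus_one: "smult_vec (-1) x = - (x :: nat \<Rightarrow> 'f::field)"
  by (simp add: fun_eq_iff)

lemma vecs_zero: "0 \<in> vecs n"
  by (simp add: vecs_def)

lemma vecs_diff: "x \<in> vecs n \<Longrightarrow> y \<in> vecs n \<Longrightarrow> x - y \<in> vecs n"
  by (simp add: vecs_def)

lemma vecs_smult_vec: "x \<in> vecs n \<Longrightarrow> smult_vec c x \<in> vecs n"
  by (simp add: vecs_def)

lemma supp_zero [simp]: "supp (0 :: nat \<Rightarrow> 'f::zero) = {}"
  by (simp add: supp_def)

lemma supp_eq_empty_iff: "supp x = {} \<longleftrightarrow> x = 0"
  by (auto simp: supp_def fun_eq_iff)

lemma supp_smult_vec: "c \<noteq> 0 \<Longrightarrow> supp (smult_vec c x) = supp x"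
  by (auto simp: supp_def)

lemma supp_add_subset: "supp (u + v) \<subseteq> supp u \<union> supp (v :: nat \<Rightarrow> 'f::monoid_add)"
  by (auto simp: supp_def)

lemma mem_vecs_iff: "x \<in> vecs n \<longleftrightarrow> supp x \<subseteq> {1..n}"
  by (auto simp: vecs_def supp_def)

definition vecs_on :: "nat set \<Rightarrow> (nat \<Rightarrow> 'f::zero) set" where
  "vecs_on X = {v. supp v \<subseteq> X}"

lemma vecs_eq_vecs_on: "vecs n = vecs_on {1..n}"
  unfolding vecs_on_def by (simp add: set_eq_iff mem_vecs_iff)

lemma vecs_on_mono: "X \<subseteq> Y \<Longrightarrow> vecs_on X \<subseteq> vecs_on Y"
  by (auto simp: vecs_on_def)

lemma vecs_on_zero [simp]: "0 \<in> vecs_on X"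
  by (simp add: vecs_on_def)

lemma vecs_on_add:
  fixes u v :: "nat \<Rightarrow> 'f::monoid_add"
  shows "u \<in> vecs_on X \<Longrightarrow> v \<in> vecs_on X \<Longrightarrow> u + v \<in> vecs_on X"
  using supp_add_subset[of u v] by (auto simp: vecs_on_def)

lemma vecs_on_smult_vec: "v \<in> vecs_on X \<Longrightarrow> smult_vec c v \<in> vecs_on X"
  by (auto simp: vecs_on_def supp_def)

definition ind_vec :: "nat set \<Rightarrow> nat \<Rightarrow> 'f::zero_neq_one" where
  "ind_vec S = (\<lambda>m. if m \<in> S then 1 else 0)"

lemma supp_ind_vec [simp]: "supp (ind_vec S :: nat \<Rightarrow> 'f::zero_neq_one) = S"
  by (simp add: supp_def ind_vec_def)

lemma ind_vec_empty [simp]: "ind_vec {} = 0"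
  by (simp add: ind_vec_def fun_eq_iff)

lemma ind_vec_eq_iff: "(ind_vec S :: nat \<Rightarrow> 'f::zero_neq_one) = ind_vec U \<longleftrightarrow> S = U"
  by (metis supp_ind_vec)

lemma ind_vec_in_vecs: "S \<subseteq> {1..n} \<Longrightarrow> (ind_vec S :: nat \<Rightarrow> 'f::field) \<in> vecs n"
  by (simp add: mem_vecs_iff)

lemma ind_vec_diff: "S \<subseteq> U \<Longrightarrow> (ind_vec U :: nat \<Rightarrow> 'f::ring_1) - ind_vec S = ind_vec (U - S)"
  by (auto simp: ind_vec_def fun_eq_iff)

definition proj :: "nat set \<Rightarrow> (nat \<Rightarrow> 'f::zero) \<Rightarrow> nat \<Rightarrow> 'f" where
  "proj X v = (\<lambda>m. if m \<in> X then v m else 0)"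

lemma proj_add: "proj X (u + v) = proj X u + proj X (v :: nat \<Rightarrow> 'f::monoid_add)"
  by (simp add: proj_def fun_eq_iff)

lemma proj_diff: "proj X (u - v) = proj X u - proj X (v :: nat \<Rightarrow> 'f::group_add)"
  by (simp add: proj_def fun_eq_iff)

lemma proj_smult_vec: "proj X (smult_vec c v) = smult_vec c (proj X v)"
  by (simp add: proj_def fun_eq_iff)

lemma supp_proj: "supp (proj X v) = supp v \<inter> X"
  by (auto simp: proj_def supp_def)

lemma proj_eq_0_iff: "proj X v = 0 \<longleftrightarrow> supp v \<inter> X = {}"
  by (simp add: supp_proj flip: supp_eq_empty_iff)

lemma proj_in_vecs_on: "proj X v \<in> vecs_on X"
  by (simp add: vecs_on_def supp_proj)

lemma proj_ind_vec: "proj X (ind_vec S) = ind_vec (S \<inter> X)"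
  by (simp add: proj_def ind_vec_def fun_eq_iff)

lemma proj_add_disjoint:
  fixes u v :: "nat \<Rightarrow> 'f::monoid_add"
  shows "supp u \<subseteq> X \<Longrightarrow> supp v \<inter> X = {} \<Longrightarrow> proj X (u + v) = u"
proof -
  assume u: "supp u \<subseteq> X" and v: "supp v \<inter> X = {}"
  have "u m = 0" if "m \<notin> X" for m using u that by (auto simp: supp_def)
  moreover have "v m = 0" if "m \<in> X" for m using v that by (auto simp: supp_def)
  ultimately show ?thesis by (simp add: proj_def fun_eq_iff)
qed

lemma proj_add_proj: "supp v \<subseteq> X \<union> Y \<Longrightarrow> X \<inter> Y = {} \<Longrightarrow> proj X v + proj Y v = (v :: nat \<Rightarrow> 'f::monoid_add)"
  by (auto simp: proj_def fun_eq_iff supp_def)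

lemma covering_finite: "is_covering n F \<Longrightarrow> finite F"
  unfolding is_covering_def by (rule finite_subset[of F "Pow {1..n}"]) auto

lemma supp_subset_if_covering: "is_covering n F \<Longrightarrow> x \<in> vecs n \<Longrightarrow> supp x \<subseteq> \<Union>F"
  by (simp add: is_covering_def mem_vecs_iff)

lemma wtF_le_card:
  assumes "finite F" "\<A> \<subseteq> F" "supp x \<subseteq> \<Union>\<A>"
  shows "wtF F x \<le> card \<A>"
  unfolding wtF_def using assms finite_subset by (intro Least_le) blast

lemma wtF_witness:
  assumes "finite F" "supp x \<subseteq> \<Union>F"
  obtains \<A> where "\<A> \<subseteq> F" "card \<A> = wtF F x" "supp x \<subseteq> \<Union>\<A>"
proof -
  let ?P = "\<lambda>k. \<exists>\<A>. \<A> \<subseteq> F \<and> finite \<A> \<and> card \<A> = k \<and> supp x \<subseteq> \<Union>\<A>"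
  have "?P (card F)" using assms by blast
  then have "?P (wtF F x)" unfolding wtF_def by (rule LeastI)
  then show ?thesis using that by blast
qed

lemma wtF_cong_supp: "supp x = supp y \<Longrightarrow> wtF F x = wtF F y"
  by (simp add: wtF_def)

lemma wtF_smult_vec: "c \<noteq> 0 \<Longrightarrow> wtF F (smult_vec c x) = wtF F x"
  by (rule wtF_cong_supp) (rule supp_smult_vec)

lemma wtF_zero [simp]: "wtF F 0 = 0"
  unfolding wtF_def by (rule Least_eq_0) (rule exI[of _ "{}"], simp)

lemma wtF_eq_0_iff:
  assumes "finite F" "supp x \<subseteq> \<Union>F"
  shows "wtF F x = 0 \<longleftrightarrow> x = 0"
proof
  assume "wtF F x = 0"
  then obtain \<A> where "\<A> \<subseteq> F" "card \<A> = 0" "supp x \<subseteq> \<Union>\<A>"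
    using wtF_witness[OF assms] by metis
  then have "\<A> = {}" using assms(1) card_0_eq finite_subset by metis
  then show "x = 0" using \<open>supp x \<subseteq> \<Union>\<A>\<close> supp_eq_empty_iff by auto
qed simp

lemma wtF_le_1_iff:
  assumes "finite F" "supp x \<subseteq> \<Union>F"
  shows "wtF F x \<le> 1 \<longleftrightarrow> x = 0 \<or> (\<exists>D\<in>F. supp x \<subseteq> D)"
proof
  assume "wtF F x \<le> 1"
  then obtain \<A> where \<A>: "\<A> \<subseteq> F" "card \<A> \<le> 1" "supp x \<subseteq> \<Union>\<A>"
    using wtF_witness[OF assms] by metis
  then have "\<A> = {} \<or> (\<exists>D. \<A> = {D})"
    using assms(1) finite_subset by (metis card_0_eq card_1_singletonE le_Suc_eq le_zero_eq One_nat_def)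
  then show "x = 0 \<or> (\<exists>D\<in>F. supp x \<subseteq> D)"
    using \<A> supp_eq_empty_iff by fastforce
next
  assume "x = 0 \<or> (\<exists>D\<in>F. supp x \<subseteq> D)"
  then show "wtF F x \<le> 1"
    using wtF_le_card[OF assms(1), of "{_}"] by fastforce
qed

lemma wtF_le_1I: "finite F \<Longrightarrow> D \<in> F \<Longrightarrow> supp x \<subseteq> D \<Longrightarrow> wtF F x \<le> 1"
  using wtF_le_card[of F "{D}" x] by simp

lemma wtF_eq_1I:
  assumes "finite F" "D \<in> F" "supp x \<subseteq> D" "x \<noteq> 0"
  shows "wtF F x = 1"
  using wtF_le_1I[OF assms(1-3)] wtF_eq_0_iff[OF assms(1), of x] assms(2-4) by force

lemma wtF_eq_2I:
  assumes "finite F" "D \<in> F" "E \<in> F" "supp x \<subseteq> D \<union> E" and "\<forall>C\<in>F. \<not> supp x \<subseteq> C"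
  shows "wtF F x = 2"
proof -
  have "wtF F x \<le> card {D, E}"
    using wtF_le_card[of F "{D, E}" x] assms(1-4) by simp
  also have "\<dots> \<le> 2" by (simp add: card_insert_le_m1)
  finally show ?thesis
    using wtF_le_1_iff[of F x] assms by fastforce
qed

section \<open>Connected components\<close>

lemma connected_fam_subset_split:
  assumes "connected_fam X" "X \<subseteq> \<A> \<union> \<B>" "\<forall>A\<in>\<A>. \<forall>B\<in>\<B>. A \<inter> B = {}"
  shows "X \<subseteq> \<A> \<or> X \<subseteq> \<B>"
proof (rule ccontr)
  assume "\<not> ?thesis"
  then have "X \<inter> \<A> \<noteq> {}" "X \<inter> \<B> \<noteq> {}" "X = (X \<inter> \<A>) \<union> (X \<inter> \<B>)"
    "\<forall>A\<in>X \<inter> \<A>. \<forall>B\<in>X \<inter> \<B>. A \<inter> B = {}"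
    using assms(2,3) by blast+
  then have "\<exists>P Q. P \<noteq> {} \<and> Q \<noteq> {} \<and> X = P \<union> Q \<and> (\<forall>A\<in>P. \<forall>B\<in>Q. A \<inter> B = {})"
    by (intro exI[of _ "X \<inter> \<A>"] exI[of _ "X \<inter> \<B>"]) simp
  then show False
    using assms(1) unfolding connected_fam_def by blast
qed

lemma connected_fam_Un:
  assumes S: "connected_fam S" and S': "connected_fam S'" and "D \<in> S" "E \<in> S'" "D \<inter> E \<noteq> {}"
    and "{} \<notin> S \<union> S'"
  shows "connected_fam (S \<union> S')"
  unfolding connected_fam_def
proof clarify
  fix \<A> \<B> assume ne: "\<A> \<noteq> {}" "\<B> \<noteq> {}" and eq: "S \<union> S' = \<A> \<union> \<B>"
    and sep: "\<forall>A\<in>\<A>. \<forall>B\<in>\<B>. A \<inter> B = {}"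
  have "S \<subseteq> \<A> \<or> S \<subseteq> \<B>" "S' \<subseteq> \<A> \<or> S' \<subseteq> \<B>"
    using connected_fam_subset_split[OF S _ sep] connected_fam_subset_split[OF S' _ sep] eq by blast+
  then have "S \<union> S' \<subseteq> \<A> \<or> S \<union> S' \<subseteq> \<B>"
    using sep assms(3-5) by blast
  then obtain X where X: "X \<in> \<A>" "X \<in> \<B>"
    using ne eq by blast
  then have "X = {}" using sep by blast
  moreover have "X \<in> S \<union> S'" using X eq by blast
  ultimately show False using assms(6) by simp
qed

lemma connected_fam_singleton:
  assumes "D \<noteq> {}"
  shows "connected_fam {D}"
  unfolding connected_fam_def
proof (intro notI, elim exE conjE)
  fix \<A> \<B> assume "\<A> \<noteq> {}" "\<B> \<noteq> {}" "{D} = \<A> \<union> \<B>" and sep: "\<forall>A\<in>\<A>. \<forall>B\<in>\<B>. A \<inter> B = {}"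
  then have "\<A> \<subseteq> {D}" "\<B> \<subseteq> {D}"
    by auto
  then have "D \<in> \<A>" "D \<in> \<B>"
    using \<open>\<A> \<noteq> {}\<close> \<open>\<B> \<noteq> {}\<close> by blast+
  then show False
    using sep assms by blast
qed

lemma components_eq:
  assumes "S \<in> components F" "S' \<in> components F" "D \<in> S" "E \<in> S'" "D \<inter> E \<noteq> {}" "{} \<notin> F"
  shows "S = S'"
proof -
  have c: "connected_fam S" "connected_fam S'" "S \<subseteq> F" "S' \<subseteq> F"
    and max: "\<And>X. S \<subseteq> X \<Longrightarrow> X \<subseteq> F \<Longrightarrow> connected_fam X \<Longrightarrow> X = S"
      "\<And>X. S' \<subseteq> X \<Longrightarrow> X \<subseteq> F \<Longrightarrow> connected_fam X \<Longrightarrow> X = S'"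
    using assms(1,2) unfolding components_def by auto
  have "connected_fam (S \<union> S')"
    using connected_fam_Un[OF c(1,2) assms(3-5)] c(3,4) assms(6) by blast
  then have "S \<union> S' = S" "S \<union> S' = S'"
    using max c(3,4) by auto
  then show ?thesis by simp
qed

lemma ex_component:
  assumes "finite F" "D \<in> F" "{} \<notin> F"
  obtains S where "S \<in> components F" "D \<in> S"
proof -
  let ?C = "{S. D \<in> S \<and> S \<subseteq> F \<and> connected_fam S}"
  have "D \<noteq> {}"
    using assms(2,3) by auto
  then have D: "{D} \<in> ?C"
    using assms(2) connected_fam_singleton by auto
  have fin: "finite (card ` ?C)"
    by (rule finite_subset[of _ "{..card F}"]) (auto intro: card_mono[OF assms(1)])
  obtain S where S: "S \<in> ?C" "card S = Max (card ` ?C)"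
    using Max_in[OF fin] D by force
  have "S \<in> components F"
    unfolding components_def
  proof (intro CollectI conjI allI impI)
    show "S \<subseteq> F" "connected_fam S" using S(1) by auto
  next
    fix S' assume S': "S \<subseteq> S' \<and> S' \<subseteq> F \<and> connected_fam S'"
    then have "S' \<in> ?C" using S(1) by auto
    then have "card S' \<le> card S" using S(2) fin by simp
    moreover have "finite S'" using S' assms(1) finite_subset by blast
    moreover have "card S \<le> card S'" using S' \<open>finite S'\<close> by (intro card_mono) auto
    ultimately show "S' = S" using S' card_subset_eq[of S' S] by simp
  qed
  then show ?thesis using that S(1) by blast
qed

lemma component_closed:
  assumes "finite F" "{} \<notin> F" "S \<in> components F" "D \<in> S" "E \<in> F" "D \<inter> E \<noteq> {}"
  shows "E \<in> S"
proof -
  obtain S' where "S' \<in> components F" "E \<in> S'"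
    using ex_component[OF assms(1,5,2)] .
  then show ?thesis
    using components_eq[OF assms(3) _ assms(4) _ assms(6,2)] by blast
qed

lemma components_disjoint:
  assumes "{} \<notin> F" "S \<in> components F" "S' \<in> components F" "S \<noteq> S'" "D \<in> S" "E \<in> S'"
  shows "D \<inter> E = {}"
  using components_eq[OF assms(2,3,5,6) _ assms(1)] assms(4) by blast

lemma component_nonempty:
  assumes "S \<in> components F" "F \<noteq> {}" "{} \<notin> F"
  shows "S \<noteq> {}"
proof
  assume "S = {}"
  obtain D where "D \<in> F" "D \<noteq> {}" using assms(2,3) by auto
  then have "{D} \<subseteq> F" "connected_fam {D}" using connected_fam_singleton by auto
  then show False using assms(1) \<open>S = {}\<close> unfolding components_def by blast
qed

lemma components_pairwise_disjoint:
  assumes "finite F" "F \<noteq> {}" "{} \<notin> F" "\<forall>A\<in>F. \<forall>B\<in>F. A \<noteq> B \<longrightarrow> A \<inter> B = {}"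
  shows "components F = (\<lambda>D. {D}) ` F"
proof -
  have singleton: "S = {D}" if "S \<in> components F" "D \<in> S" for S D
  proof -
    have "S \<subseteq> F" "connected_fam S" using that(1) unfolding components_def by auto
    moreover have "\<forall>A\<in>{D}. \<forall>B\<in>S - {D}. A \<inter> B = {}" using assms(4) \<open>S \<subseteq> F\<close> that(2) by blast
    ultimately have "S \<subseteq> {D} \<or> S \<subseteq> S - {D}"
      using connected_fam_subset_split[of S "{D}" "S - {D}"] by blast
    then show ?thesis using that(2) by blast
  qed
  show ?thesis
  proof (intro set_eqI iffI)
    fix S assume S: "S \<in> components F"
    then have "S \<noteq> {}" "S \<subseteq> F"
      using component_nonempty[OF S assms(2,3)] by (auto simp: components_def)
    then show "S \<in> (\<lambda>D. {D}) ` F"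
      using singleton[OF S] by blast
  next
    fix S assume "S \<in> (\<lambda>D. {D}) ` F"
    then obtain D where "D \<in> F" "S = {D}" by blast
    moreover obtain S' where "S' \<in> components F" "D \<in> S'"
      using ex_component[OF assms(1) \<open>D \<in> F\<close> assms(3)] .
    ultimately show "S \<in> components F"
      using singleton by simp
  qed
qed

lemma two_components_pairwise_disjoint:
  assumes "finite F" "{} \<notin> F" "\<forall>A\<in>F. \<forall>B\<in>F. A \<noteq> B \<longrightarrow> A \<inter> B = {}"
    and "card (components F) = 2"
  obtains A B where "F = {A, B}" "A \<noteq> B" "A \<inter> B = {}"
proof -
  have "F \<noteq> {}"
  proof
    assume "F = {}"
    then have "components F \<subseteq> {{}}" by (auto simp: components_def)
    then have "card (components F) \<le> card {{} :: nat set}"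
      using card_mono[of "{{}}" "components F"] by simp
    then show False using assms(4) by simp
  qed
  then have "card F = 2"
    using assms(4) components_pairwise_disjoint[OF assms(1) _ assms(2,3)] card_image[of "\<lambda>D. {D}" F]
    by (simp add: inj_on_def)
  then obtain A B where "F = {A, B}" "A \<noteq> B"
    unfolding card_2_iff by blast
  moreover have "A \<inter> B = {}"
    using assms(3) calculation by simp
  ultimately show ?thesis by (rule that)
qed

section \<open>Linear isometries and the extension property\<close>

lemma linear_on_zero:
  assumes "linear_on C t" "0 \<in> C"
  shows "t 0 = (0 :: nat \<Rightarrow> 'f::field)"
proof -
  have "t (smult_vec 0 0) = smult_vec 0 (t 0)"
    using assms unfolding linear_on_def by blast
  then show ?thesis by simp
qed

lemma linear_on_diff:
  assumes "linear_on C t" "\<forall>c. \<forall>x\<in>C. smult_vec c x \<in> C" "x \<in> C" "y \<in> C"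
  shows "t (x - y) = t x - (t y :: nat \<Rightarrow> 'f::field)"
proof -
  have "x + smult_vec (-1) y = x - y"
    by (simp add: fun_eq_iff)
  then have "t (x - y) = t (x + smult_vec (-1) y)"
    by (simp only:)
  also have "\<dots> = t x + t (smult_vec (-1) y)"
    using assms unfolding linear_on_def by blast
  also have "t (smult_vec (-1) y) = smult_vec (-1) (t y)"
    using assms unfolding linear_on_def by blast
  finally show ?thesis
    by (simp only: smult_vec_minus_one diff_conv_add_uminus)
qed

context
  fixes n :: nat and F :: "nat set set" and T :: "(nat \<Rightarrow> 'f::field) \<Rightarrow> nat \<Rightarrow> 'f"
  assumes iso: "linear_isometry n F T"
begin

lemma linear_isometry_in_vecs: "x \<in> vecs n \<Longrightarrow> T x \<in> vecs n"
  using iso unfolding linear_isometry_def by blast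

lemma linear_on_vecs_if_linear_isometry: "linear_on (vecs n) T"
  using iso unfolding linear_isometry_def by blast

lemma linear_isometry_zero: "T 0 = 0"
  using linear_on_zero[OF linear_on_vecs_if_linear_isometry vecs_zero] .

lemma linear_isometry_add: "x \<in> vecs n \<Longrightarrow> y \<in> vecs n \<Longrightarrow> T (x + y) = T x + T y"
  using iso unfolding linear_isometry_def linear_on_def by blast

lemma linear_isometry_diff: "x \<in> vecs n \<Longrightarrow> y \<in> vecs n \<Longrightarrow> T (x - y) = T x - T y"
  using linear_on_diff[OF linear_on_vecs_if_linear_isometry] vecs_smult_vec by blast

lemma linear_isometry_wtF:
  assumes "x \<in> vecs n"
  shows "wtF F (T x) = wtF F x"
proof -
  have "dF F (T x) (T 0) = dF F x 0"
    using iso assms vecs_zero unfolding linear_isometry_def by blast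
  then show ?thesis
    by (simp add: dF_def linear_isometry_zero)
qed

lemma linear_isometry_inj_on:
  assumes "is_covering n F"
  shows "inj_on T (vecs n)"
proof (rule inj_onI)
  fix x y assume xy: "x \<in> vecs n" "y \<in> vecs n" "T x = T y"
  have "dF F (T x) (T y) = dF F x y"
    using iso xy(1,2) unfolding linear_isometry_def by blast
  then have "wtF F (x - y) = 0"
    using xy(3) by (simp add: dF_def)
  then show "x = y"
    using wtF_eq_0_iff[OF covering_finite[OF assms] supp_subset_if_covering[OF assms vecs_diff[OF xy(1,2)]]]
    by simp
qed

end

lemma linear_code_line:
  assumes "z \<in> vecs n"
  shows "linear_code n (range (\<lambda>c. smult_vec c z))"
  unfolding linear_code_def
proof (intro conjI ballI allI)
  show "range (\<lambda>c. smult_vec c z) \<subseteq> vecs n"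
    using vecs_smult_vec[OF assms] by auto
  show "0 \<in> range (\<lambda>c. smult_vec c z)"
    by (rule range_eqI[of _ _ 0]) simp
next
  fix u v assume "u \<in> range (\<lambda>c. smult_vec c z)" "v \<in> range (\<lambda>c. smult_vec c z)"
  then obtain a b where "u = smult_vec a z" "v = smult_vec b z" by blast
  then show "u + v \<in> range (\<lambda>c. smult_vec c z)"
    by (intro range_eqI[of _ _ "a + b"]) (simp add: fun_eq_iff distrib_right)
next
  fix c u assume "u \<in> range (\<lambda>c. smult_vec c z)"
  then obtain a where "u = smult_vec a z" by blast
  then show "smult_vec c u \<in> range (\<lambda>c. smult_vec c z)"
    by (intro range_eqI[of _ _ "c * a"]) (simp add: fun_eq_iff mult.assoc)
qed

lemma MEP_isometry_of_equal_weight: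
  fixes x y :: "nat \<Rightarrow> 'f::{finite,field}"
  assumes mep: "MEP TYPE('f) n F" and "x \<in> vecs n" "y \<in> vecs n" "x \<noteq> 0" "wtF F x = wtF F y"
  obtains T where "linear_isometry n F T" "T x = y"
proof -
  obtain k where k: "x k \<noteq> 0"
    using assms(4) by (auto simp: fun_eq_iff)
  define t where "t = (\<lambda>v :: nat \<Rightarrow> 'f. smult_vec (v k / x k) y)"
  have t_line: "t (smult_vec c x) = smult_vec c y" for c
    using k by (simp add: t_def)
  have "local_equiv F (range (\<lambda>c. smult_vec c x)) (range (\<lambda>c. smult_vec c y)) t"
    unfolding local_equiv_def linear_on_def
  proof (intro conjI ballI allI)
    show "t (u + v) = t u + t v" for u v
      by (simp add: t_def fun_eq_iff add_divide_distrib distrib_right)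
    show "t (smult_vec c u) = smult_vec c (t u)" for c u
      by (simp add: t_def fun_eq_iff)
    show "t ` range (\<lambda>c. smult_vec c x) \<subseteq> range (\<lambda>c. smult_vec c y)"
      using t_line by auto
  next
    fix u assume "u \<in> range (\<lambda>c. smult_vec c x)"
    then obtain c where "u = smult_vec c x" by blast
    then show "wtF F (t u) = wtF F u"
      using t_line assms(5) by (cases "c = 0") (simp_all add: t_def wtF_smult_vec)
  qed
  then obtain T where "linear_isometry n F T" "\<forall>u\<in>range (\<lambda>c. smult_vec c x). T u = t u"
    using mep[unfolded MEP_def, rule_format, OF conjI[OF linear_code_line[OF assms(2)]
        conjI[OF linear_code_line[OF assms(3)]]]] by blast
  moreover have "T (smult_vec 1 x) = t (smult_vec 1 x)"
    using calculation(2) by blast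
  ultimately show ?thesis
    using that t_line[of 1] by simp
qed

section \<open>Necessity\<close>

lemma ind_vec_pair_split:
  fixes w z :: "nat \<Rightarrow> 'f::field"
  assumes sep: "\<forall>D\<in>F. \<forall>E\<in>F. i \<in> D \<longrightarrow> j \<in> E \<longrightarrow> D \<inter> E = {}"
    and sum: "w + z = ind_vec {i, j}"
    and w: "w = 0 \<or> (\<exists>D\<in>F. supp w \<subseteq> D)" and z: "z = 0 \<or> (\<exists>E\<in>F. supp z \<subseteq> E)"
  shows "w = ind_vec {i} \<or> w = ind_vec {j}"
proof -
  have one_block: "\<not> {i, j} \<subseteq> C" if "C \<in> F" for C
    using sep that by blast
  have "w \<noteq> 0"
  proof
    assume "w = 0"
    then have "supp z = {i, j}" using sum by simp
    then show False using z one_block by (auto simp flip: supp_eq_empty_iff)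
  qed
  moreover have "z \<noteq> 0"
  proof
    assume "z = 0"
    then have "supp w = {i, j}" using sum by simp
    then show False using w one_block by (auto simp flip: supp_eq_empty_iff)
  qed
  ultimately obtain D E where D: "D \<in> F" "supp w \<subseteq> D" and E: "E \<in> F" "supp z \<subseteq> E"
    using w z by blast
  have "{i, j} \<subseteq> D \<union> E"
    using sum supp_add_subset[of w z] D(2) E(2) by auto
  then consider "i \<in> D" "j \<in> E" | "j \<in> D" "i \<in> E"
    using one_block D(1) E(1) by blast
  then have "D \<inter> E = {}"
    using sep D(1) E(1) by cases (blast, blast)
  then have "w = proj D (ind_vec {i, j})"
    using proj_add_disjoint[OF D(2), of z] E(2) sum by auto
  then have w_eq: "w = ind_vec ({i, j} \<inter> D)"
    by (simp add: proj_ind_vec)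
  then have "{i, j} \<inter> D \<noteq> {}"
    using \<open>w \<noteq> 0\<close> by auto
  then have "{i, j} \<inter> D = {i} \<or> {i, j} \<inter> D = {j}"
    using one_block[OF D(1)] by blast
  then show ?thesis
    using w_eq by auto
qed

lemma linear_isometry_split_to_separated_pair:
  fixes T :: "(nat \<Rightarrow> 'f::field) \<Rightarrow> nat \<Rightarrow> 'f"
  assumes cov: "is_covering n F" and iso: "linear_isometry n F T"
    and sep: "\<forall>D\<in>F. \<forall>E\<in>F. i \<in> D \<longrightarrow> j \<in> E \<longrightarrow> D \<inter> E = {}"
    and x: "x \<in> vecs n" "T x = ind_vec {i, j}"
    and w: "w \<in> vecs n" "\<exists>D\<in>F. supp w \<subseteq> D" "\<exists>E\<in>F. supp (x - w) \<subseteq> E"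
  shows "T w = ind_vec {i} \<or> T w = ind_vec {j}"
proof -
  have fin: "finite F"
    using covering_finite[OF cov] .
  have block_or_zero: "T v = 0 \<or> (\<exists>D\<in>F. supp (T v) \<subseteq> D)" if "v \<in> vecs n" "\<exists>D\<in>F. supp v \<subseteq> D" for v
  proof -
    have "wtF F (T v) \<le> 1"
      using linear_isometry_wtF[OF iso that(1)] wtF_le_1I[OF fin] that(2) by auto
    moreover have "supp (T v) \<subseteq> \<Union>F"
      using supp_subset_if_covering[OF cov linear_isometry_in_vecs[OF iso that(1)]] .
    ultimately show ?thesis
      using wtF_le_1_iff[OF fin] by blast
  qed
  show ?thesis
  proof (rule ind_vec_pair_split[OF sep])
    show "T w + T (x - w) = ind_vec {i, j}"
      using linear_isometry_diff[OF iso x(1) w(1)] x(2) by simp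
    show "T w = 0 \<or> (\<exists>D\<in>F. supp (T w) \<subseteq> D)"
      using block_or_zero[OF w(1,2)] .
    show "T (x - w) = 0 \<or> (\<exists>E\<in>F. supp (T (x - w)) \<subseteq> E)"
      using block_or_zero[OF vecs_diff[OF x(1) w(1)] w(3)] .
  qed
qed

lemma linear_isometry_overlap_not_to_separated_pair:
  fixes T :: "(nat \<Rightarrow> 'f::field) \<Rightarrow> nat \<Rightarrow> 'f"
  assumes cov: "is_covering n F" and iso: "linear_isometry n F T"
    and A: "A \<in> F" "A' \<in> F" "A \<noteq> A'" "i \<in> A" "i \<in> A'"
    and sep: "\<forall>D\<in>F. \<forall>E\<in>F. i' \<in> D \<longrightarrow> j' \<in> E \<longrightarrow> D \<inter> E = {}"
  shows "T (ind_vec (A \<union> A')) \<noteq> ind_vec {i', j'}"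
proof
  assume Tx: "T (ind_vec (A \<union> A')) = ind_vec {i', j'}"
  have AA': "A \<union> A' \<subseteq> {1..n}"
    using cov A(1,2) unfolding is_covering_def by blast
  have ind_vecs: "ind_vec S \<in> vecs n" if "S \<subseteq> A \<union> A'" for S
    using that AA' by (intro ind_vec_in_vecs) blast
  have to_pair: "T (ind_vec S) \<in> {ind_vec {i'}, ind_vec {j'}}"
    if S: "S \<subseteq> A \<union> A'" "S = A \<or> S = A' \<or> S = A - A'" for S
  proof -
    have "ind_vec (A \<union> A') - ind_vec S = (ind_vec (A \<union> A' - S) :: nat \<Rightarrow> 'f)"
      using ind_vec_diff[OF S(1)] .
    moreover have "S \<subseteq> A \<or> S \<subseteq> A'" "A \<union> A' - S \<subseteq> A \<or> A \<union> A' - S \<subseteq> A'"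
      using S(2) by blast+
    ultimately show ?thesis
      using linear_isometry_split_to_separated_pair[OF cov iso sep ind_vecs[OF subset_refl] Tx ind_vecs[OF S(1)]]
        A(1,2) by auto
  qed
  let ?W = "{ind_vec A, ind_vec A', ind_vec (A - A')} :: (nat \<Rightarrow> 'f) set"
  have "T ` ?W \<subseteq> {ind_vec {i'}, ind_vec {j'}}"
    using to_pair[of A] to_pair[of A'] to_pair[of "A - A'"] by blast
  then have "card (T ` ?W) \<le> card {ind_vec {i'} :: nat \<Rightarrow> 'f, ind_vec {j'}}"
    by (intro card_mono) auto
  also have "\<dots> \<le> 2"
    by (rule card_insert_le_m1) auto
  finally have "card (T ` ?W) \<le> 2" .
  moreover have "?W \<subseteq> vecs n"
    using ind_vecs by blast
  then have "inj_on T ?W"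
    using inj_on_subset[OF linear_isometry_inj_on[OF iso cov]] by blast
  then have "card (T ` ?W) = card ?W"
    by (rule card_image)
  moreover have "ind_vec A \<noteq> (ind_vec A' :: nat \<Rightarrow> 'f)" "ind_vec A \<noteq> (ind_vec (A - A') :: nat \<Rightarrow> 'f)"
    "ind_vec A' \<noteq> (ind_vec (A - A') :: nat \<Rightarrow> 'f)"
    using A(3-5) by (auto simp only: ind_vec_eq_iff)
  then have "card ?W = 3"
    by simp
  ultimately show False
    by linarith
qed

lemma ex_separated_point:
  assumes fin: "finite F" and ne: "{} \<notin> F" and two: "1 < card (components F)"
    and "A \<in> F" "i \<in> A"
  obtains j where "j \<in> \<Union>F" "\<forall>D\<in>F. \<forall>E\<in>F. i \<in> D \<longrightarrow> j \<in> E \<longrightarrow> D \<inter> E = {}"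
proof -
  obtain Sa where Sa: "Sa \<in> components F" "A \<in> Sa"
    using ex_component[OF fin assms(4) ne] .
  have "finite (components F)"
    using two card.infinite by fastforce
  then obtain S1 S2 where "S1 \<in> components F" "S2 \<in> components F" "S1 \<noteq> S2"
    using two card_le_Suc0_iff_eq[of "components F"] by force
  then obtain Sb where Sb: "Sb \<in> components F" "Sb \<noteq> Sa"
    by blast
  obtain B where B: "B \<in> Sb"
    using component_nonempty[OF Sb(1) _ ne] assms(4) by blast
  then have "B \<in> F"
    using Sb(1) by (auto simp: components_def)
  then obtain j where j: "j \<in> B"
    using ne by (metis ex_in_conv)
  have "\<forall>D\<in>F. \<forall>E\<in>F. i \<in> D \<longrightarrow> j \<in> E \<longrightarrow> D \<inter> E = {}"
  proof (intro ballI impI)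
    fix D E assume "D \<in> F" "E \<in> F" "i \<in> D" "j \<in> E"
    then have "D \<in> Sa" "E \<in> Sb"
      using component_closed[OF fin ne Sa] component_closed[OF fin ne Sb(1) B] assms(5) j by blast+
    then show "D \<inter> E = {}"
      using components_disjoint[OF ne Sa(1) Sb(1)] Sb(2) by blast
  qed
  then show ?thesis
    using that \<open>B \<in> F\<close> j by blast
qed

lemma MEP_imp_pairwise_disjoint:
  assumes mep: "MEP TYPE('f::{finite,field}) n F" and cov: "is_covering n F"
    and nr: "no_redundant F" and ne: "{} \<notin> F" and two: "1 < card (components F)"
  shows "\<forall>A\<in>F. \<forall>A'\<in>F. A \<noteq> A' \<longrightarrow> A \<inter> A' = {}"
proof (intro ballI impI, rule ccontr)
  fix A A' assume A: "A \<in> F" "A' \<in> F" "A \<noteq> A'" "A \<inter> A' \<noteq> {}"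
  have fin: "finite F"
    using covering_finite[OF cov] .
  obtain i where i: "i \<in> A" "i \<in> A'"
    using A(4) by blast
  obtain j where j: "j \<in> \<Union>F" and sep: "\<forall>D\<in>F. \<forall>E\<in>F. i \<in> D \<longrightarrow> j \<in> E \<longrightarrow> D \<inter> E = {}"
    using ex_separated_point[OF fin ne two A(1) i(1)] .
  then obtain B where "B \<in> F" "j \<in> B"
    by blast
  have "{i, j} \<subseteq> {1..n}" "A \<union> A' \<subseteq> {1..n}"
    using cov A(1,2) i j unfolding is_covering_def by blast+
  then have vecs: "ind_vec (A \<union> A') \<in> vecs n" "ind_vec {i, j} \<in> vecs n"
    by (simp_all only: ind_vec_in_vecs)
  have "wtF F (ind_vec (A \<union> A') :: nat \<Rightarrow> 'f) = 2"
  proof (rule wtF_eq_2I[OF fin A(1,2)])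
    show "supp (ind_vec (A \<union> A') :: nat \<Rightarrow> 'f) \<subseteq> A \<union> A'"
      by simp
    show "\<forall>C\<in>F. \<not> supp (ind_vec (A \<union> A') :: nat \<Rightarrow> 'f) \<subseteq> C"
      using nr A(1-3) unfolding no_redundant_def by auto
  qed
  moreover have "wtF F (ind_vec {i, j} :: nat \<Rightarrow> 'f) = 2"
  proof (rule wtF_eq_2I[OF fin A(1) \<open>B \<in> F\<close>])
    show "supp (ind_vec {i, j} :: nat \<Rightarrow> 'f) \<subseteq> A \<union> B"
      using i(1) \<open>j \<in> B\<close> by simp
    show "\<forall>C\<in>F. \<not> supp (ind_vec {i, j} :: nat \<Rightarrow> 'f) \<subseteq> C"
      using sep by auto
  qed
  moreover have "ind_vec (A \<union> A') \<noteq> (0 :: nat \<Rightarrow> 'f)"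
    using i supp_eq_empty_iff[of "ind_vec (A \<union> A') :: nat \<Rightarrow> 'f"] by auto
  ultimately obtain T where "linear_isometry n F T" "T (ind_vec (A \<union> A')) = (ind_vec {i, j} :: nat \<Rightarrow> 'f)"
    using MEP_isometry_of_equal_weight[OF mep vecs] by auto
  then show False
    using linear_isometry_overlap_not_to_separated_pair[OF cov _ A(1-3) i sep] by blast
qed

lemma wtF_two_blocks_le_1_iff:
  assumes "supp v \<subseteq> A \<union> B"
  shows "wtF {A, B} v \<le> 1 \<longleftrightarrow> supp v \<subseteq> A \<or> supp v \<subseteq> B"
  using wtF_le_1_iff[of "{A, B}" v] assms supp_eq_empty_iff[of v] by auto

lemma wtF_add_two_blocks_le_1_iff:
  fixes u v :: "nat \<Rightarrow> 'f::monoid_add"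
  assumes AB: "A \<inter> B = {}" and X: "X \<in> {A, B}" and Y: "Y \<in> {A, B}"
    and u: "supp u \<subseteq> X" "u \<noteq> 0" and v: "supp v \<subseteq> Y" "v \<noteq> 0"
  shows "wtF {A, B} (u + v) \<le> 1 \<longleftrightarrow> X = Y"
proof
  assume "X = Y"
  then have "supp (u + v) \<subseteq> X"
    using supp_add_subset[of u v] u(1) v(1) by blast
  then show "wtF {A, B} (u + v) \<le> 1"
    using wtF_le_1I[of "{A, B}" X] X by blast
next
  assume le1: "wtF {A, B} (u + v) \<le> 1"
  obtain a b where a: "a \<in> supp u" and b: "b \<in> supp v"
    using u(2) v(2) by (metis supp_eq_empty_iff ex_in_conv)
  show "X = Y"
  proof (rule ccontr)
    assume "X \<noteq> Y"
    then have XY: "X \<inter> Y = {}" "X \<union> Y = A \<union> B"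
      using AB X Y by auto
    have "a \<notin> supp v" "b \<notin> supp u"
      using a b u(1) v(1) XY(1) by blast+
    then have ab: "a \<in> supp (u + v)" "b \<in> supp (u + v)"
      using a b by (auto simp: supp_def)
    have "supp (u + v) \<subseteq> A \<or> supp (u + v) \<subseteq> B"
      using le1 wtF_two_blocks_le_1_iff[of "u + v" A B] supp_add_subset[of u v] u(1) v(1) XY(2)
      by blast
    then show False
      using ab a b u(1) v(1) XY(1) X Y AB by blast
  qed
qed

lemma card_vecs_on:
  assumes "finite X"
  shows "card (vecs_on X :: (nat \<Rightarrow> 'f::{finite,zero}) set) = card (UNIV :: 'f set) ^ card X"
proof -
  have "bij_betw (\<lambda>v. restrict v X) (vecs_on X :: (nat \<Rightarrow> 'f) set) (PiE X (\<lambda>_. UNIV))"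
  proof (rule bij_betw_byWitness[where f' = "\<lambda>h m. if m \<in> X then h m else 0"])
    show "\<forall>v\<in>vecs_on X. (\<lambda>m. if m \<in> X then restrict v X m else 0) = v"
      by (auto simp: fun_eq_iff vecs_on_def supp_def)
    show "\<forall>h\<in>PiE X (\<lambda>_. UNIV). restrict (\<lambda>m. if m \<in> X then h m else (0 :: 'f)) X = h"
      by (auto simp: fun_eq_iff PiE_def extensional_def)
    show "(\<lambda>v. restrict v X) ` vecs_on X \<subseteq> PiE X (\<lambda>_. UNIV)"
      by auto
    show "(\<lambda>h m. if m \<in> X then h m else 0) ` PiE X (\<lambda>_. UNIV) \<subseteq> (vecs_on X :: (nat \<Rightarrow> 'f) set)"
      by (auto simp: vecs_on_def supp_def)
  qed
  then have "card (vecs_on X :: (nat \<Rightarrow> 'f) set) = card (PiE X (\<lambda>_. UNIV :: 'f set))"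
    by (rule bij_betw_same_card)
  then show ?thesis
    using card_PiE[OF assms, of "\<lambda>_. UNIV :: 'f set"] by (simp add: prod_constant)
qed

lemma finite_vecs_on: "finite X \<Longrightarrow> finite (vecs_on X :: (nat \<Rightarrow> 'f::{finite,zero}) set)"
  using card_vecs_on[of X, where 'f = 'f] card_ge_0_finite by force

lemma card_field_ge_2: "2 \<le> card (UNIV :: 'f::{finite,field} set)"
proof -
  have "card {0 :: 'f, 1} \<le> card (UNIV :: 'f set)"
    by (rule card_mono) auto
  then show ?thesis by simp
qed

text \<open>A weight-one vector supported in one block goes to a weight-one vector; if two of them went
  to different blocks, their sum would be a weight-one vector sent to a weight-two one.\<close>
lemma linear_isometry_two_blocks_image:
  fixes T :: "(nat \<Rightarrow> 'f::field) \<Rightarrow> nat \<Rightarrow> 'f"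
  assumes iso: "linear_isometry n {A, B} T" and AB: "A \<inter> B = {}" "A \<union> B = {1..n}"
  shows "T ` vecs_on A \<subseteq> vecs_on A \<or> T ` vecs_on A \<subseteq> vecs_on B"
proof (rule ccontr)
  have vecs: "vecs_on A \<subseteq> vecs n" "vecs_on B \<subseteq> vecs n"
    using AB(2) vecs_on_mono[of _ "{1..n}"] by (auto simp: vecs_eq_vecs_on)
  have low_weight: "wtF {A, B} (T v) \<le> 1" if "v \<in> vecs_on A" for v
    using linear_isometry_wtF[OF iso, of v] vecs that wtF_le_1I[of "{A, B}" A v]
    by (auto simp: vecs_on_def)
  have block: "T v \<in> vecs_on A \<or> T v \<in> vecs_on B" if "v \<in> vecs_on A" for v
    using low_weight[OF that] wtF_two_blocks_le_1_iff[of "T v" A B]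
      linear_isometry_in_vecs[OF iso, of v] that vecs AB(2)
    by (auto simp: vecs_on_def mem_vecs_iff)
  assume "\<not> ?thesis"
  then obtain u v where u: "u \<in> vecs_on A" "T u \<notin> vecs_on A" and v: "v \<in> vecs_on A" "T v \<notin> vecs_on B"
    by blast
  then have Tu: "T u \<in> vecs_on B" "T u \<noteq> 0" and Tv: "T v \<in> vecs_on A" "T v \<noteq> 0"
    using block by (auto simp del: vecs_on_zero, auto)
  have "u + v \<in> vecs_on A"
    using u(1) v(1) by (rule vecs_on_add)
  then have "wtF {A, B} (T u + T v) \<le> 1"
    using low_weight linear_isometry_add[OF iso] u(1) v(1) vecs by fastforce
  then have "B = A"
    using wtF_add_two_blocks_le_1_iff[OF AB(1), of B A "T u" "T v"] Tu Tv by (simp add: vecs_on_def)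
  then show False
    using u(2) Tu(1) by simp
qed

lemma MEP_two_blocks_card_le:
  assumes mep: "MEP TYPE('f::{finite,field}) n {A, B}"
    and AB: "A \<inter> B = {}" "A \<union> B = {1..n}" and "A \<noteq> {}" "B \<noteq> {}"
  shows "card A \<le> card B"
proof (rule ccontr)
  assume lt: "\<not> card A \<le> card B"
  obtain i j where ij: "i \<in> A" "j \<in> B"
    using assms(4,5) by blast
  let ?ei = "ind_vec {i} :: nat \<Rightarrow> 'f" and ?ej = "ind_vec {j} :: nat \<Rightarrow> 'f"
  have vecs: "?ei \<in> vecs n" "?ej \<in> vecs n"
    using ij AB(2) by (auto intro!: ind_vec_in_vecs)
  have ne: "?ei \<noteq> 0" "?ej \<noteq> 0"
    using supp_eq_empty_iff[of ?ei] supp_eq_empty_iff[of ?ej] by auto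
  then have "wtF {A, B} ?ei = wtF {A, B} ?ej"
    using wtF_eq_1I[of "{A, B}" A ?ei] wtF_eq_1I[of "{A, B}" B ?ej] ij by simp
  then obtain T where T: "linear_isometry n {A, B} T" "T ?ei = ?ej"
    by (rule MEP_isometry_of_equal_weight[OF mep vecs ne(1)])
  have "?ei \<in> vecs_on A" "?ej \<notin> vecs_on A"
    using ij AB(1) by (auto simp: vecs_on_def)
  then have not_A: "\<not> T ` vecs_on A \<subseteq> vecs_on A"
    using T(2) by (metis image_subset_iff)
  from linear_isometry_two_blocks_image[OF T(1) AB]
  have into_B: "T ` vecs_on A \<subseteq> vecs_on B"
  proof
    assume "T ` vecs_on A \<subseteq> vecs_on A"
    with not_A show ?thesis by contradiction
  qed
  have fin: "finite A" "finite B"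
    using AB(2) by (metis finite_Un finite_atLeastAtMost)+
  have "A \<subseteq> {1..n}"
    using AB(2) by blast
  then have "vecs_on A \<subseteq> vecs n"
    by (simp add: vecs_eq_vecs_on vecs_on_mono)
  moreover have "is_covering n {A, B}"
    using AB(2) by (auto simp: is_covering_def)
  ultimately have "inj_on T (vecs_on A)"
    using linear_isometry_inj_on[OF T(1)] inj_on_subset by blast
  then have "card (vecs_on A :: (nat \<Rightarrow> 'f) set) \<le> card (vecs_on B :: (nat \<Rightarrow> 'f) set)"
    using card_inj_on_le[OF _ into_B finite_vecs_on[OF fin(2)]] by blast
  moreover have "card (UNIV :: 'f set) ^ card B < card (UNIV :: 'f set) ^ card A"
    using lt card_field_ge_2[where 'f = 'f] by (intro power_strict_increasing) auto
  ultimately show False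
    using card_vecs_on[OF fin(1), where 'f = 'f] card_vecs_on[OF fin(2), where 'f = 'f] by simp
qed

lemma no_empty_block:
  assumes "n \<ge> 1" "is_covering n F" "no_redundant F"
  shows "{} \<notin> F"
proof
  assume "{} \<in> F"
  obtain A where "A \<in> F" "1 \<in> A"
    using assms(1,2) unfolding is_covering_def by (metis UnionE atLeastAtMost_iff order_refl)
  then show False
    using assms(3) \<open>{} \<in> F\<close> unfolding no_redundant_def by blast
qed

lemma MEP_imp_k_partition:
  assumes "n \<ge> 1" and cov: "is_covering n F" and nr: "no_redundant F"
    and two: "card (components F) = 2" and mep: "MEP TYPE('f::{finite,field}) n F"
  shows "\<exists>k. k_partition n F k"
proof -
  have ne: "{} \<notin> F"
    using no_empty_block[OF assms(1) cov nr] .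
  have disj: "\<forall>A\<in>F. \<forall>A'\<in>F. A \<noteq> A' \<longrightarrow> A \<inter> A' = {}"
    using MEP_imp_pairwise_disjoint[OF mep cov nr ne] two by simp
  obtain A B where F: "F = {A, B}" "A \<noteq> B" "A \<inter> B = {}"
    by (rule two_components_pairwise_disjoint[OF covering_finite[OF cov] ne disj two])
  have AB: "A \<union> B = {1..n}" "A \<noteq> {}" "B \<noteq> {}"
    using cov ne unfolding F(1) is_covering_def by auto
  have "card A \<le> card B"
    using MEP_two_blocks_card_le[OF _ F(3) AB] mep unfolding F(1) .
  moreover have "card B \<le> card A"
  proof (rule MEP_two_blocks_card_le[OF _ _ _ AB(3,2)])
    show "MEP TYPE('f) n {B, A}"
      using mep unfolding F(1) by (simp only: insert_commute)
    show "B \<inter> A = {}" "B \<union> A = {1..n}"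
      using F(3) AB(1) by blast+
  qed
  ultimately have "k_partition n F (card A)"
    using F AB unfolding k_partition_def by auto
  then show ?thesis ..
qed

section \<open>Extending injective linear maps\<close>

lemma (in vector_space_pair) linear_exists_extension_from_subspace:
  assumes P: "vs1.subspace P"
    and add: "\<And>x y. x \<in> P \<Longrightarrow> y \<in> P \<Longrightarrow> g (x + y) = g x + g y"
    and scale: "\<And>c x. x \<in> P \<Longrightarrow> g (s1 c x) = s2 c (g x)"
  obtains h where "Vector_Spaces.linear s1 s2 h" "\<And>x. x \<in> P \<Longrightarrow> h x = g x"
proof -
  obtain B where B: "B \<subseteq> P" "vs1.independent B" "P \<subseteq> vs1.span B"
    by (rule vs1.maximal_independent_subset)
  obtain h where h: "Vector_Spaces.linear s1 s2 h" "\<forall>b\<in>B. h b = g b"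
    using linear_independent_extend[OF B(2)] by blast
  interpret h: Vector_Spaces.linear s1 s2 h
    by (fact h(1))
  have "vs1.subspace {x \<in> P. h x = g x}"
    unfolding vs1.subspace_def
  proof (intro conjI ballI allI)
    show "0 \<in> {x \<in> P. h x = g x}"
      using vs1.subspace_0[OF P] scale[of 0 0] by simp
  next
    fix x y assume "x \<in> {x \<in> P. h x = g x}" "y \<in> {x \<in> P. h x = g x}"
    then show "x + y \<in> {x \<in> P. h x = g x}"
      using vs1.subspace_add[OF P] add h.add by simp
  next
    fix c x assume "x \<in> {x \<in> P. h x = g x}"
    then show "s1 c x \<in> {x \<in> P. h x = g x}"
      using vs1.subspace_scale[OF P] scale h.scale by simp
  qed
  moreover have "B \<subseteq> {x \<in> P. h x = g x}"
    using B(1) h(2) by blast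
  ultimately have span: "vs1.span B \<subseteq> {x \<in> P. h x = g x}"
    by (rule vs1.span_minimal[rotated])
  show ?thesis
  proof (rule that[OF h(1)])
    fix x assume "x \<in> P"
    then show "h x = g x"
      using span B(3) by blast
  qed
qed

lemma (in vector_space_pair) linear_extend_to_basis_bij:
  assumes BX: "vs1.independent BX" "finite BX" and CY: "vs2.independent CY" "finite CY"
    and card: "card BX = card CY"
    and BP: "BP \<subseteq> BX" "f ` BP \<subseteq> CY" "inj_on f BP"
  obtains h where "Vector_Spaces.linear s1 s2 h" "\<forall>b\<in>BP. h b = f b" "h ` BX = CY"
    "inj_on h (vs1.span BX)"
proof -
  have "card (BX - BP) = card (CY - f ` BP)"
    using card BP card_image[OF BP(3)] BX(2) CY(2) by (simp add: card_Diff_subset finite_subset)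
  then obtain \<phi> where \<phi>: "bij_betw \<phi> (BX - BP) (CY - f ` BP)"
    using finite_same_card_bij BX(2) CY(2) by blast
  obtain h where h: "Vector_Spaces.linear s1 s2 h" "\<forall>b\<in>BX. h b = (if b \<in> BP then f b else \<phi> b)"
    using linear_independent_extend[OF BX(1), of "\<lambda>b. if b \<in> BP then f b else \<phi> b"] by blast
  have "h ` BX = f ` BP \<union> \<phi> ` (BX - BP)"
    using h(2) BP(1) by (force simp: image_iff)
  then have h_BX: "h ` BX = CY"
    using \<phi> BP(2) by (auto simp: bij_betw_def)
  then have "inj_on h BX"
    using eq_card_imp_inj_on[OF BX(2), of h] card by simp
  then have "inj_on h (vs1.span BX)"
    using linear_inj_on_span_iff_independent_image[OF h(1)] h_BX CY(1) by simp
  moreover have "\<forall>b\<in>BP. h b = f b"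
    using h(2) BP(1) by auto
  ultimately show ?thesis
    using that h(1) h_BX by blast
qed

lemma (in vector_space_pair) linear_inj_on_extend_to_span:
  assumes f: "Vector_Spaces.linear s1 s2 f" and P: "vs1.subspace P" "P \<subseteq> vs1.span U"
    and fin: "finite U" "finite W" and dim: "vs1.dim U = vs2.dim W"
    and img: "f ` P \<subseteq> vs2.span W" and inj: "inj_on f P"
  obtains h where "Vector_Spaces.linear s1 s2 h" "\<And>x. x \<in> P \<Longrightarrow> h x = f x"
    "h ` vs1.span U \<subseteq> vs2.span W" "inj_on h (vs1.span U)"
proof -
  obtain BP where BP: "BP \<subseteq> P" "vs1.independent BP" "P \<subseteq> vs1.span BP"
    by (rule vs1.maximal_independent_subset)
  have indep_fBP: "vs2.independent (f ` BP)"
    using linear_independent_injective_image[OF f BP(2)] inj vs1.span_subspace[OF BP(1,3) P(1)] by simp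
  obtain BX where BX: "BP \<subseteq> BX" "BX \<subseteq> vs1.span U" "vs1.independent BX" "vs1.span U \<subseteq> vs1.span BX"
    using vs1.maximal_independent_subset_extend[of BP "vs1.span U"] BP(1,2) P(2) by blast
  obtain CY where CY: "f ` BP \<subseteq> CY" "CY \<subseteq> vs2.span W" "vs2.independent CY" "vs2.span W \<subseteq> vs2.span CY"
    using vs2.maximal_independent_subset_extend[OF _ indep_fBP, of "vs2.span W"] BP(1) img by blast
  have fin_BX: "finite BX" and fin_CY: "finite CY"
    using vs1.independent_span_bound[OF fin(1) BX(3,2)] vs2.independent_span_bound[OF fin(2) CY(3,2)]
    by auto
  have card: "card BX = card CY"
    using vs1.basis_card_eq_dim[OF BX(2,4,3)] vs2.basis_card_eq_dim[OF CY(2,4,3)] dim by simp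
  obtain h where h: "Vector_Spaces.linear s1 s2 h" "\<forall>b\<in>BP. h b = f b" "h ` BX = CY"
      "inj_on h (vs1.span BX)"
    using linear_extend_to_basis_bij[OF BX(3) fin_BX CY(3) fin_CY card BX(1) CY(1) inj_on_subset[OF inj BP(1)]]
    by blast
  have "h x = f x" if "x \<in> P" for x
    using linear_eq_on[OF h(1) f] h(2) BP(3) that by (metis subsetD)
  moreover have "h ` vs1.span U \<subseteq> vs2.span W"
    using BX(4) linear_span_image[OF h(1), of BX] h(3) vs2.span_minimal[OF CY(2) vs2.subspace_span]
    by auto
  ultimately show ?thesis
    using that h(1) inj_on_subset[OF h(4) BX(4)] by blast
qed

interpretation vec: vector_space "smult_vec :: 'f::field \<Rightarrow> (nat \<Rightarrow> 'f) \<Rightarrow> nat \<Rightarrow> 'f"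
  by unfold_locales (simp_all add: fun_eq_iff algebra_simps)

interpretation vec_pair: vector_space_pair
  "smult_vec :: 'f::field \<Rightarrow> (nat \<Rightarrow> 'f) \<Rightarrow> nat \<Rightarrow> 'f" "smult_vec :: 'f \<Rightarrow> (nat \<Rightarrow> 'f) \<Rightarrow> nat \<Rightarrow> 'f" ..

lemma sum_fun_apply: "sum f A x = (\<Sum>a\<in>A. f a x)"
  by (induct A rule: infinite_finite_induct) auto

lemma independent_unit_vecs:
  assumes "finite X"
  shows "vec.independent ((\<lambda>a. ind_vec {a} :: nat \<Rightarrow> 'f::field) ` X)"
proof (rule vec.independent_if_scalars_zero)
  let ?e = "\<lambda>a. ind_vec {a} :: nat \<Rightarrow> 'f"
  show "finite (?e ` X)"
    using assms by simp
  fix c v assume sum: "(\<Sum>w\<in>?e ` X. smult_vec (c w) w) = 0" and v: "v \<in> ?e ` X"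
  then obtain a where a: "a \<in> X" "v = ?e a" by blast
  have inj: "inj_on ?e X"
    by (rule inj_onI) (simp add: ind_vec_eq_iff)
  have "0 = (\<Sum>w\<in>?e ` X. smult_vec (c w) w) a"
    using sum by simp
  also have "\<dots> = (\<Sum>b\<in>X. c (?e b) * ?e b a)"
    by (simp add: sum_fun_apply sum.reindex[OF inj])
  also have "\<dots> = c (?e a)"
    using a(1) assms by (simp add: ind_vec_def if_distrib cong: if_cong)
  finally show "c v = 0"
    using a(2) by simp
qed

lemma dim_unit_vecs:
  assumes "finite X"
  shows "vec.dim ((\<lambda>a. ind_vec {a} :: nat \<Rightarrow> 'f::field) ` X) = card X"
proof -
  have "inj_on (\<lambda>a. ind_vec {a} :: nat \<Rightarrow> 'f) X"
    by (rule inj_onI) (simp add: ind_vec_eq_iff)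
  then have "card ((\<lambda>a. ind_vec {a} :: nat \<Rightarrow> 'f) ` X) = card X"
    by (rule card_image)
  then show ?thesis
    using vec.dim_eq_card_independent[OF independent_unit_vecs[OF assms, where 'f = 'f]] by simp
qed

lemma vecs_on_eq_span_unit_vecs:
  assumes "finite X"
  shows "vecs_on X = vec.span ((\<lambda>a. ind_vec {a} :: nat \<Rightarrow> 'f::field) ` X)"
proof
  let ?e = "\<lambda>a. ind_vec {a} :: nat \<Rightarrow> 'f"
  show "vecs_on X \<subseteq> vec.span (?e ` X)"
  proof
    fix v :: "nat \<Rightarrow> 'f" assume v: "v \<in> vecs_on X"
    have "v = (\<Sum>a\<in>X. smult_vec (v a) (?e a))"
    proof
      fix m
      show "v m = (\<Sum>a\<in>X. smult_vec (v a) (?e a)) m"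
        using v assms by (auto simp: sum_fun_apply ind_vec_def vecs_on_def supp_def if_distrib cong: if_cong)
    qed
    also have "\<dots> \<in> vec.span (?e ` X)"
      by (intro vec.span_sum vec.span_scale vec.span_base) auto
    finally show "v \<in> vec.span (?e ` X)" .
  qed
  have "vec.subspace (vecs_on X :: (nat \<Rightarrow> 'f) set)"
    unfolding vec.subspace_def by (simp add: vecs_on_add vecs_on_smult_vec)
  then show "vec.span (?e ` X) \<subseteq> vecs_on X"
    by (rule vec.span_minimal[rotated]) (auto simp: vecs_on_def)
qed

section \<open>Sufficiency\<close>

lemma wtF_two_blocks:
  assumes AB: "A \<inter> B = {}" and v: "supp v \<subseteq> A \<union> B"
  shows "wtF {A, B} v = of_bool (proj A v \<noteq> 0) + of_bool (proj B v \<noteq> 0)"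
proof -
  have fin: "finite {A, B}" by simp
  have A: "proj A v = 0 \<longleftrightarrow> supp v \<subseteq> B" and B: "proj B v = 0 \<longleftrightarrow> supp v \<subseteq> A"
    using AB v by (auto simp: proj_eq_0_iff)
  consider "proj A v = 0" "proj B v = 0" | "proj A v = 0" "proj B v \<noteq> 0"
    | "proj A v \<noteq> 0" "proj B v = 0" | "proj A v \<noteq> 0" "proj B v \<noteq> 0"
    by blast
  then show ?thesis
  proof cases
    case 1
    then have "v = 0"
      using A B AB by (auto simp flip: supp_eq_empty_iff)
    then show ?thesis using 1 by simp
  next
    case 2
    then have "wtF {A, B} v = 1"
      using wtF_eq_1I[OF fin, of B v] A B by (auto simp flip: supp_eq_empty_iff)
    then show ?thesis using 2 by simp
  next
    case 3
    then have "wtF {A, B} v = 1"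
      using wtF_eq_1I[OF fin, of A v] A B by (auto simp flip: supp_eq_empty_iff)
    then show ?thesis using 3 by simp
  next
    case 4
    then have "wtF {A, B} v = 2"
      using wtF_eq_2I[OF fin, of A B v] A B v by auto
    then show ?thesis using 4 by simp
  qed
qed

lemma linear_on_proj: "linear_on C (proj X)"
  by (simp add: linear_on_def proj_add proj_smult_vec)

lemma linear_code_diff: "linear_code n C \<Longrightarrow> x \<in> C \<Longrightarrow> y \<in> C \<Longrightarrow> x - y \<in> C"
  unfolding linear_code_def by (metis diff_conv_add_uminus smult_vec_minus_one)

lemma subspace_image_linear_code:
  assumes C: "linear_code n C" and p: "linear_on C p"
  shows "vec.subspace (p ` C)"
  unfolding vec.subspace_def
proof (intro conjI ballI allI)
  show "0 \<in> p ` C"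
    using C linear_on_zero[OF p] unfolding linear_code_def by force
next
  fix u v assume "u \<in> p ` C" "v \<in> p ` C"
  then obtain a b where "a \<in> C" "b \<in> C" "u = p a" "v = p b" by blast
  then show "u + v \<in> p ` C"
    using C p unfolding linear_code_def linear_on_def by (metis image_eqI)
next
  fix c u assume "u \<in> p ` C"
  then obtain a where "a \<in> C" "u = p a" by blast
  then show "smult_vec c u \<in> p ` C"
    using C p unfolding linear_code_def linear_on_def by (metis image_eqI)
qed

lemma linear_on_factor:
  fixes p f :: "(nat \<Rightarrow> 'f::field) \<Rightarrow> nat \<Rightarrow> 'f"
  assumes C: "linear_code n C" and p: "linear_on C p" and f: "linear_on C f"
    and ker: "\<And>x. x \<in> C \<Longrightarrow> f x = 0 \<longleftrightarrow> p x = 0"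
  obtains g where "linear_on (p ` C) g" "\<And>x. x \<in> C \<Longrightarrow> g (p x) = f x" "inj_on g (p ` C)"
proof -
  have smult: "\<forall>c. \<forall>x\<in>C. smult_vec c x \<in> C"
    using C unfolding linear_code_def by blast
  have diff: "h (x - y) = h x - h y" if "linear_on C h" "x \<in> C" "y \<in> C" for h x y
    using linear_on_diff[OF that(1) smult that(2,3)] .
  have cong: "f x = f y \<longleftrightarrow> p x = p y" if "x \<in> C" "y \<in> C" for x y
    using ker[OF linear_code_diff[OF C that]] diff[OF f that] diff[OF p that] by simp
  define g where "g y = f (SOME x. x \<in> C \<and> p x = y)" for y
  have g: "g (p x) = f x" if "x \<in> C" for x
  proof -
    have "\<exists>x'. x' \<in> C \<and> p x' = p x" using that by blast
    then have "(SOME x'. x' \<in> C \<and> p x' = p x) \<in> C \<and> p (SOME x'. x' \<in> C \<and> p x' = p x) = p x"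
      by (rule someI_ex)
    then show ?thesis
      using cong that unfolding g_def by blast
  qed
  have "linear_on (p ` C) g"
    unfolding linear_on_def
  proof (intro conjI ballI allI)
    fix u v assume "u \<in> p ` C" "v \<in> p ` C"
    then obtain a b where ab: "a \<in> C" "b \<in> C" "u = p a" "v = p b" by blast
    moreover have "a + b \<in> C"
      using C ab(1,2) unfolding linear_code_def by blast
    ultimately show "g (u + v) = g u + g v"
      using p f g unfolding linear_on_def by metis
  next
    fix c u assume "u \<in> p ` C"
    then obtain a where a: "a \<in> C" "u = p a" by blast
    moreover have "smult_vec c a \<in> C"
      using smult a(1) by blast
    ultimately show "g (smult_vec c u) = smult_vec c (g u)"
      using p f g unfolding linear_on_def by metis
  qed
  moreover have "inj_on g (p ` C)"
    using g cong by (auto intro!: inj_onI)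
  ultimately show ?thesis
    using that g by blast
qed

lemma linear_on_inj_extend_vecs_on:
  fixes g :: "(nat \<Rightarrow> 'f::field) \<Rightarrow> nat \<Rightarrow> 'f"
  assumes fin: "finite X" "finite Y" and card: "card X = card Y"
    and P: "vec.subspace P" "P \<subseteq> vecs_on X"
    and g: "linear_on P g" "g ` P \<subseteq> vecs_on Y" "inj_on g P"
  obtains h where "Vector_Spaces.linear smult_vec smult_vec h" "\<And>x. x \<in> P \<Longrightarrow> h x = g x"
    "h ` vecs_on X \<subseteq> vecs_on Y" "inj_on h (vecs_on X)"
proof -
  obtain h0 where h0: "Vector_Spaces.linear smult_vec smult_vec h0" "\<And>x. x \<in> P \<Longrightarrow> h0 x = g x"
    by (rule vec_pair.linear_exists_extension_from_subspace[OF P(1), of g])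
      (use g(1) in \<open>auto simp: linear_on_def\<close>)
  have h0_img: "h0 ` P \<subseteq> vecs_on Y" "inj_on h0 P"
    using g(2,3) h0(2) by (auto simp: inj_on_def image_subset_iff)
  have spans: "vecs_on X = vec.span ((\<lambda>a. ind_vec {a}) ` X)"
    "vecs_on Y = vec.span ((\<lambda>a. ind_vec {a}) ` Y)"
    using vecs_on_eq_span_unit_vecs fin by blast+
  have dims: "vec.dim ((\<lambda>a. ind_vec {a} :: nat \<Rightarrow> 'f) ` X) = vec.dim ((\<lambda>a. ind_vec {a} :: nat \<Rightarrow> 'f) ` Y)"
    using dim_unit_vecs fin card by metis
  obtain h where h: "Vector_Spaces.linear smult_vec smult_vec h" "\<And>x. x \<in> P \<Longrightarrow> h x = h0 x"
    "h ` vec.span ((\<lambda>a. ind_vec {a}) ` X) \<subseteq> vec.span ((\<lambda>a. ind_vec {a}) ` Y)"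
    "inj_on h (vec.span ((\<lambda>a. ind_vec {a}) ` X))"
    by (rule vec_pair.linear_inj_on_extend_to_span[OF h0(1) P(1) _ _ _ dims])
      (use P(2) fin h0_img spans in auto)
  show ?thesis
    by (rule that[OF h(1)]) (simp_all add: h h0(2) spans)
qed

lemma linear_isometry_of_block_maps:
  fixes hA hB :: "(nat \<Rightarrow> 'f::field) \<Rightarrow> nat \<Rightarrow> 'f"
  assumes AB: "A \<inter> B = {}" "A \<union> B = {1..n}" and AB': "{A', B'} = {A, B}"
    and hA: "Vector_Spaces.linear smult_vec smult_vec hA" "hA ` vecs_on A \<subseteq> vecs_on A'" "inj_on hA (vecs_on A)"
    and hB: "Vector_Spaces.linear smult_vec smult_vec hB" "hB ` vecs_on B \<subseteq> vecs_on B'" "inj_on hB (vecs_on B)"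
  shows "linear_isometry n {A, B} (\<lambda>v. hA (proj A v) + hB (proj B v))"
    (is "linear_isometry n {A, B} ?T")
proof -
  interpret hA: Vector_Spaces.linear smult_vec smult_vec hA by (fact hA(1))
  interpret hB: Vector_Spaces.linear smult_vec smult_vec hB by (fact hB(1))
  have AB'_disj: "A' \<inter> B' = {}" "A' \<union> B' = {1..n}"
    using AB AB' by (auto simp: doubleton_eq_iff)
  have imgA: "supp (hA (proj A v)) \<subseteq> A'" and imgB: "supp (hB (proj B v)) \<subseteq> B'" for v
    using hA(2) hB(2) proj_in_vecs_on by (fastforce simp: vecs_on_def)+
  have T_vecs: "?T v \<in> vecs n" for v
    using imgA[of v] imgB[of v] supp_add_subset[of "hA (proj A v)" "hB (proj B v)"] AB'_disj(2)
    by (auto simp: mem_vecs_iff)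
  have proj_T: "proj A' (?T v) = hA (proj A v)" "proj B' (?T v) = hB (proj B v)" for v
  proof -
    have "supp (hB (proj B v)) \<inter> A' = {}" "supp (hA (proj A v)) \<inter> B' = {}"
      using imgA[of v] imgB[of v] AB'_disj(1) by blast+
    then have "proj A' (?T v) = hA (proj A v)" "proj B' (hB (proj B v) + hA (proj A v)) = hB (proj B v)"
      by (simp_all only: proj_add_disjoint[OF imgA] proj_add_disjoint[OF imgB])
    then show "proj A' (?T v) = hA (proj A v)" "proj B' (?T v) = hB (proj B v)"
      by (simp_all only: add.commute)
  qed
  have zeroA: "hA (proj A v) = 0 \<longleftrightarrow> proj A v = 0" and zeroB: "hB (proj B v) = 0 \<longleftrightarrow> proj B v = 0" for v
    using hA(3) hB(3) hA.zero hB.zero proj_in_vecs_on vecs_on_zero unfolding inj_on_def by metis+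
  have wt: "wtF {A, B} (?T v) = wtF {A, B} v" if "v \<in> vecs n" for v
  proof -
    have "wtF {A, B} (?T v) = wtF {A', B'} (?T v)"
      using AB' by simp
    also have "\<dots> = of_bool (proj A v \<noteq> 0) + of_bool (proj B v \<noteq> 0)"
      using wtF_two_blocks[OF AB'_disj(1), of "?T v"] T_vecs[of v] AB'_disj(2) proj_T zeroA zeroB
      by (simp add: mem_vecs_iff)
    also have "\<dots> = wtF {A, B} v"
      using wtF_two_blocks[OF AB(1), of v] that AB(2) by (simp add: mem_vecs_iff)
    finally show ?thesis .
  qed
  have T_diff: "?T x - ?T y = ?T (x - y)" for x y
    by (simp add: proj_diff hA.diff hB.diff)
  have "linear_on (vecs n) ?T"
    unfolding linear_on_def
    by (simp add: proj_add proj_smult_vec hA.add hB.add hA.scale hB.scale vec.scale_right_distrib)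
  then show ?thesis
    unfolding linear_isometry_def dF_def
    using T_vecs wt[OF vecs_diff] T_diff by auto
qed

lemma of_bool_add_eq_imp:
  assumes "of_bool a + of_bool b = (of_bool c + of_bool d :: nat)" "a \<longrightarrow> c" "b \<longrightarrow> d"
  shows "(a \<longleftrightarrow> c) \<and> (b \<longleftrightarrow> d)"
  using assms by (cases a; cases b; cases c; cases d) simp_all

locale two_block_equiv =
  fixes n :: nat and A B :: "nat set" and C1 C2 :: "(nat \<Rightarrow> 'f::field) set"
    and t :: "(nat \<Rightarrow> 'f) \<Rightarrow> nat \<Rightarrow> 'f"
  assumes blocks: "A \<inter> B = {}" "A \<union> B = {1..n}" "A \<noteq> B"
    and code1: "linear_code n C1" and code2: "linear_code n C2"
    and equiv: "local_equiv {A, B} C1 C2 t"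
begin

lemma t_linear_on: "linear_on C1 t"
  using equiv unfolding local_equiv_def by blast

lemma code_add: "x \<in> C1 \<Longrightarrow> y \<in> C1 \<Longrightarrow> x + y \<in> C1"
  using code1 unfolding linear_code_def by blast

lemma t_add: "x \<in> C1 \<Longrightarrow> y \<in> C1 \<Longrightarrow> t (x + y) = t x + t y"
  using t_linear_on unfolding linear_on_def by blast

lemma t_zero: "t 0 = 0"
  using linear_on_zero[OF t_linear_on] code1 unfolding linear_code_def by blast

lemma t_wtF: "x \<in> C1 \<Longrightarrow> wtF {A, B} (t x) = wtF {A, B} x"
  using equiv unfolding local_equiv_def by blast

lemma supp_code: "x \<in> C1 \<Longrightarrow> supp x \<subseteq> A \<union> B"
  using code1 unfolding linear_code_def blocks(2) mem_vecs_iff[symmetric] by blast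

lemma supp_t_code: "x \<in> C1 \<Longrightarrow> supp (t x) \<subseteq> A \<union> B"
  using equiv code2 unfolding local_equiv_def linear_code_def blocks(2) mem_vecs_iff[symmetric]
  by blast

lemma t_nonzero: "x \<in> C1 \<Longrightarrow> x \<noteq> 0 \<Longrightarrow> t x \<noteq> 0"
  using t_wtF wtF_eq_0_iff[of "{A, B}" x] supp_code by fastforce

lemma t_block:
  assumes "x \<in> C1" "supp x \<subseteq> S" "S \<in> {A, B}"
  shows "supp (t x) \<subseteq> A \<or> supp (t x) \<subseteq> B"
proof -
  have "wtF {A, B} x \<le> 1"
    using wtF_le_1I[of "{A, B}" S x] assms(2,3) by simp
  then show ?thesis
    using t_wtF[OF assms(1)] wtF_two_blocks_le_1_iff[OF supp_t_code[OF assms(1)]] by simp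
qed

definition sends :: "nat set \<Rightarrow> nat set \<Rightarrow> bool" where
  "sends S T \<longleftrightarrow> (\<exists>x\<in>C1. x \<noteq> 0 \<and> supp x \<subseteq> S \<and> supp (t x) \<subseteq> T)"

text \<open>A sum of two nonzero vectors, each supported in a block, has weight one exactly when the
  blocks coincide; as t preserves the weight, t x and t x' lie in one block iff x and x' do.\<close>
lemma sends_eq_iff:
  assumes "sends S T" "sends S' T'" "S \<in> {A, B}" "S' \<in> {A, B}" "T \<in> {A, B}" "T' \<in> {A, B}"
  shows "S = S' \<longleftrightarrow> T = T'"
proof -
  obtain x x' where x: "x \<in> C1" "x \<noteq> 0" "supp x \<subseteq> S" "supp (t x) \<subseteq> T"
    and x': "x' \<in> C1" "x' \<noteq> 0" "supp x' \<subseteq> S'" "supp (t x') \<subseteq> T'"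
    using assms(1,2) unfolding sends_def by blast
  have "wtF {A, B} (x + x') = wtF {A, B} (t x + t x')"
    using t_wtF[OF code_add[OF x(1) x'(1)]] t_add[OF x(1) x'(1)] by simp
  then show ?thesis
    using wtF_add_two_blocks_le_1_iff[OF blocks(1) assms(3,4) x(3,2) x'(3,2)]
      wtF_add_two_blocks_le_1_iff[OF blocks(1) assms(5,6) x(4) t_nonzero[OF x(1,2)] x'(4) t_nonzero[OF x'(1,2)]]
    by simp
qed

definition maps_blocks_to :: "nat set \<Rightarrow> nat set \<Rightarrow> bool" where
  "maps_blocks_to A' B' \<longleftrightarrow>
     (\<forall>x\<in>C1. supp x \<subseteq> A \<longrightarrow> supp (t x) \<subseteq> A') \<and> (\<forall>x\<in>C1. supp x \<subseteq> B \<longrightarrow> supp (t x) \<subseteq> B')"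

lemma maps_blocks_to_cases: "maps_blocks_to A B \<or> maps_blocks_to B A"
proof (rule ccontr)
  have sends_other: "sends S T"
    if "x \<in> C1" "supp x \<subseteq> S" "S \<in> {A, B}" "\<not> supp (t x) \<subseteq> T'" "{T, T'} = {A, B}" for x S T T'
  proof -
    have "x \<noteq> 0"
      using that(4) t_zero by auto
    moreover have "supp (t x) \<subseteq> T"
      using t_block[OF that(1-3)] that(4,5) by (auto simp: doubleton_eq_iff)
    ultimately show ?thesis
      using that(1,2) unfolding sends_def by blast
  qed
  assume "\<not> ?thesis"
  then have "sends A B \<or> sends B A" "sends A A \<or> sends B B"
    unfolding maps_blocks_to_def using sends_other by (blast intro: insert_commute)+
  then show False
    using sends_eq_iff[of A B A A] sends_eq_iff[of A B B B] sends_eq_iff[of B A A A] sends_eq_iff[of B A B B]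
      blocks(3) by auto
qed

lemma proj_t_eq_0_iff:
  assumes to: "maps_blocks_to A' B'" and AB': "{A', B'} = {A, B}" and x: "x \<in> C1"
  shows "proj A' (t x) = 0 \<longleftrightarrow> proj A x = 0" "proj B' (t x) = 0 \<longleftrightarrow> proj B x = 0"
proof -
  have disj: "A' \<inter> B' = {}" and cov: "A' \<union> B' = A \<union> B"
    using AB' blocks(1) by (auto simp: doubleton_eq_iff)
  have "proj A x = 0 \<longleftrightarrow> supp x \<subseteq> B" "proj B x = 0 \<longleftrightarrow> supp x \<subseteq> A"
    using supp_code[OF x] blocks(1) by (auto simp: proj_eq_0_iff)
  moreover have "supp x \<subseteq> A \<Longrightarrow> supp (t x) \<subseteq> A'" "supp x \<subseteq> B \<Longrightarrow> supp (t x) \<subseteq> B'"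
    using to x unfolding maps_blocks_to_def by blast+
  ultimately have imp: "proj A x = 0 \<Longrightarrow> proj A' (t x) = 0" "proj B x = 0 \<Longrightarrow> proj B' (t x) = 0"
    using disj by (auto simp: proj_eq_0_iff)
  have supp_tx: "supp (t x) \<subseteq> A' \<union> B'"
    using supp_t_code[OF x] cov by simp
  have "of_bool (proj A' (t x) \<noteq> 0) + of_bool (proj B' (t x) \<noteq> 0) = wtF {A', B'} (t x)"
    by (rule sym[OF wtF_two_blocks[OF disj supp_tx]])
  also have "\<dots> = of_bool (proj A x \<noteq> 0) + (of_bool (proj B x \<noteq> 0) :: nat)"
    using AB' t_wtF[OF x] wtF_two_blocks[OF blocks(1) supp_code[OF x]] by simp
  finally have "(proj A' (t x) \<noteq> 0 \<longleftrightarrow> proj A x \<noteq> 0) \<and> (proj B' (t x) \<noteq> 0 \<longleftrightarrow> proj B x \<noteq> 0)"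
    using imp by (intro of_bool_add_eq_imp) auto
  then show "proj A' (t x) = 0 \<longleftrightarrow> proj A x = 0" "proj B' (t x) = 0 \<longleftrightarrow> proj B x = 0"
    by auto
qed

lemma block_map:
  assumes to: "maps_blocks_to A' B'" and AB': "{A', B'} = {A, B}" and card: "card A = card B"
    and X: "(X, X') = (A, A') \<or> (X, X') = (B, B')"
  obtains h where "Vector_Spaces.linear smult_vec smult_vec h" "\<And>x. x \<in> C1 \<Longrightarrow> h (proj X x) = proj X' (t x)"
    "h ` vecs_on X \<subseteq> vecs_on X'" "inj_on h (vecs_on X)"
proof -
  have ker: "proj X' (t x) = 0 \<longleftrightarrow> proj X x = 0" if "x \<in> C1" for x
    using proj_t_eq_0_iff[OF to AB' that] X by auto
  have lin: "linear_on C1 (\<lambda>x. proj X' (t x))"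
    using t_linear_on unfolding linear_on_def by (simp add: proj_add proj_smult_vec)
  obtain g where g: "linear_on (proj X ` C1) g" "\<And>x. x \<in> C1 \<Longrightarrow> g (proj X x) = proj X' (t x)"
    "inj_on g (proj X ` C1)"
    using linear_on_factor[OF code1 linear_on_proj lin ker] by blast
  have "finite A" "finite B"
    using blocks(2) by (metis finite_Un finite_atLeastAtMost)+
  then have fin: "finite X" "finite X'" and card_X: "card X = card X'"
    using X AB' card by (auto simp: doubleton_eq_iff)
  have img: "proj X ` C1 \<subseteq> vecs_on X" "g ` proj X ` C1 \<subseteq> vecs_on X'"
    using g(2) proj_in_vecs_on by auto
  obtain h where "Vector_Spaces.linear smult_vec smult_vec h" "\<And>p. p \<in> proj X ` C1 \<Longrightarrow> h p = g p"
    "h ` vecs_on X \<subseteq> vecs_on X'" "inj_on h (vecs_on X)"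
    using linear_on_inj_extend_vecs_on[OF fin card_X subspace_image_linear_code[OF code1 linear_on_proj]
        img(1) g(1) img(2) g(3)] by blast
  then show ?thesis
    using that g(2) by simp
qed

theorem extends_to_linear_isometry:
  assumes "card A = card B"
  shows "\<exists>T. linear_isometry n {A, B} T \<and> (\<forall>x\<in>C1. T x = t x)"
proof -
  obtain A' B' where to: "maps_blocks_to A' B'" and AB': "{A', B'} = {A, B}"
    using maps_blocks_to_cases by blast
  obtain hA where hA: "Vector_Spaces.linear smult_vec smult_vec hA"
    "\<And>x. x \<in> C1 \<Longrightarrow> hA (proj A x) = proj A' (t x)" "hA ` vecs_on A \<subseteq> vecs_on A'" "inj_on hA (vecs_on A)"
    using block_map[OF to AB' assms] by blast
  obtain hB where hB: "Vector_Spaces.linear smult_vec smult_vec hB"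
    "\<And>x. x \<in> C1 \<Longrightarrow> hB (proj B x) = proj B' (t x)" "hB ` vecs_on B \<subseteq> vecs_on B'" "inj_on hB (vecs_on B)"
    using block_map[OF to AB' assms] by blast
  have disj: "A' \<inter> B' = {}" and cov: "supp (t x) \<subseteq> A' \<union> B'" if "x \<in> C1" for x
    using AB' blocks(1) supp_t_code[OF that] by (auto simp: doubleton_eq_iff)
  have "\<forall>x\<in>C1. hA (proj A x) + hB (proj B x) = t x"
    using hA(2) hB(2) proj_add_proj[OF cov disj] by simp
  then show ?thesis
    using linear_isometry_of_block_maps[OF blocks(1,2) AB' hA(1,3,4) hB(1,3,4)] by blast
qed

end

lemma k_partition_imp_MEP:
  assumes cov: "is_covering n F" and two: "card (components F) = 2" and kp: "k_partition n F k"
  shows "MEP TYPE('f::{finite,field}) n F"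
proof -
  have ne: "{} \<notin> F" and disj: "\<forall>A\<in>F. \<forall>B\<in>F. A \<noteq> B \<longrightarrow> A \<inter> B = {}"
    using kp unfolding k_partition_def by auto
  obtain A B where F: "F = {A, B}" "A \<noteq> B" "A \<inter> B = {}"
    by (rule two_components_pairwise_disjoint[OF covering_finite[OF cov] ne disj two])
  have AB: "A \<union> B = {1..n}" "card A = card B"
    using cov kp unfolding F(1) is_covering_def k_partition_def by auto
  show ?thesis
    unfolding MEP_def
  proof (intro allI impI, elim conjE)
    fix C1 C2 :: "(nat \<Rightarrow> 'f) set" and t
    assume "linear_code n C1" "linear_code n C2" "local_equiv F C1 C2 t"
    moreover have "A \<inter> B = {}" "A \<union> B = {1..n}" "A \<noteq> B"
      using F(2,3) AB(1) by simp_all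
    ultimately interpret two_block_equiv n A B C1 C2 t
      by unfold_locales (simp_all add: F(1))
    show "\<exists>T. linear_isometry n F T \<and> (\<forall>x\<in>C1. T x = t x)"
      using extends_to_linear_isometry[OF AB(2)] by (simp add: F(1))
  qed
qed

theorem proposition9:
  fixes n :: nat and F :: "nat set set"
  assumes "n \<ge> 1"
    and "is_covering n F"
    and "no_redundant F"
    and "card (components F) = 2"
  shows "MEP TYPE('f::{finite,field}) n F \<longleftrightarrow> (\<exists>k. k_partition n F k)"
  using MEP_imp_k_partition[OF assms] k_partition_imp_MEP[OF assms(2,4)] by blast

end
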